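(* There exists a constant $h>0$ (depending only on $x$ and $d_{\max}$) such that for every $k\ge t$ with $d_{\min}+1\le n-k\le d_{\max}+1$, writing $\ell=n-k$, we have $a_{k_1,\dots,k_x}<h\cdot n^{-\ell}$ for every tuple $(k_1,\dots,k_x)$ of integers with $t_i\le k_i\le a_i$ and $\sum_i k_i=k$, and $\alpha_k\le\frac{h}{n^2}$.
   Context: Random graph model: $V$ is a set of $n$ vertices, $B\subseteq V$ a target set with $|B|=t$, each $v\in V$ has a prescribed out-degree $d_v$ with $2\le d_{\min}\le d_v\le d_{\max}$ (constants independent of $n$), and for each $v$ independently its out-neighbour set is chosen uniformly among all $d_v$-element subsets of $V$. Let $d_1,\dots,d_x$ be the distinct out-degrees, $a_i$ the number of vertices of out-degree $d_i$, $t_i$ the number of vertices of $B$ of out-degree $d_i$. For $S\supseteq B$ containing $k_i$ vertices of out-degree $d_i$, $R(k_1,\dots,k_x)$ is the probability that every vertex of $S$ has a directed path to $B$ lying inside $S$. For $k=\sum_i k_i$ with $t_i\le k_i\le a_i$, $a_{k_1,\dots,k_x}=\left(\prod_{i=1}^x\binom{a_i-t_i}{k_i-t_i}\left(\binom{n-k}{d_i}/\binom{n}{d_i}\right)^{a_i-k_i}\right)R(k_1,\dots,k_x)$, with the factor $(\binom{n-k}{d_i}/\binom{n}{d_i})^{a_i-k_i}$ equal to $1$ when $a_i=k_i$ and $\binom{m}{d}=0$ for $d>m$, and $\alpha_k=\sum_{\sum_i k_i=k,\ t_i\le k_i\le a_i}a_{k_1,\dots,k_x}$. *)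

theory Defs
  imports "HOL-Probability.Probability"
begin

text \<open>Vertices are natural numbers; V is the finite vertex set, B the target set,
  d the out-degree function. Distinct out-degrees are indexed by their value
  (the set degs V d), so a tuple (k_1,...,k_x) is a function kk on degs V d.\<close>

definition degs :: "nat set \<Rightarrow> (nat \<Rightarrow> nat) \<Rightarrow> nat set" where
  "degs V d = d ` V"

definition acnt :: "nat set \<Rightarrow> (nat \<Rightarrow> nat) \<Rightarrow> nat \<Rightarrow> nat" where
  "acnt V d \<delta> = card {v \<in> V. d v = \<delta>}"

definition tcnt :: "nat set \<Rightarrow> (nat \<Rightarrow> nat) \<Rightarrow> nat \<Rightarrow> nat" where
  "tcnt B d \<delta> = card {v \<in> B. d v = \<delta>}"

definition rand_graph :: "nat set \<Rightarrow> (nat \<Rightarrow> nat) \<Rightarrow> (nat \<Rightarrow> nat set) pmf" where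
  "rand_graph V d = Pi_pmf V {} (\<lambda>v. pmf_of_set {A. A \<subseteq> V \<and> card A = d v})"

definition reaches_in :: "nat set \<Rightarrow> (nat \<Rightarrow> nat set) \<Rightarrow> nat \<Rightarrow> nat set \<Rightarrow> bool" where
  "reaches_in S G v B \<longleftrightarrow> (\<exists>b\<in>B. (v, b) \<in> {(u, w). u \<in> S \<and> w \<in> S \<and> w \<in> G u}\<^sup>*)"

definition R_set :: "nat set \<Rightarrow> nat set \<Rightarrow> (nat \<Rightarrow> nat) \<Rightarrow> nat set \<Rightarrow> real" where
  "R_set V B d S = measure_pmf.prob (rand_graph V d) {G. \<forall>v\<in>S. reaches_in S G v B}"

text \<open>R(k_1,...,k_x): the probability for a set S with B \<subseteq> S \<subseteq> V having kk \<delta> vertices of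
  out-degree \<delta> (well defined by symmetry of the model).\<close>
definition R :: "nat set \<Rightarrow> nat set \<Rightarrow> (nat \<Rightarrow> nat) \<Rightarrow> (nat \<Rightarrow> nat) \<Rightarrow> real" where
  "R V B d kk = R_set V B d
     (SOME S. B \<subseteq> S \<and> S \<subseteq> V \<and> (\<forall>\<delta>\<in>degs V d. card {v \<in> S. d v = \<delta>} = kk \<delta>))"

definition acoef :: "nat set \<Rightarrow> nat set \<Rightarrow> (nat \<Rightarrow> nat) \<Rightarrow> (nat \<Rightarrow> nat) \<Rightarrow> real" where
  "acoef V B d kk =
     (\<Prod>\<delta>\<in>degs V d.
        real ((acnt V d \<delta> - tcnt B d \<delta>) choose (kk \<delta> - tcnt B d \<delta>)) *
        (real ((card V - sum kk (degs V d)) choose \<delta>) / real (card V choose \<delta>))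
          ^ (acnt V d \<delta> - kk \<delta>))
     * R V B d kk"

definition tuples :: "nat set \<Rightarrow> nat set \<Rightarrow> (nat \<Rightarrow> nat) \<Rightarrow> nat \<Rightarrow> (nat \<Rightarrow> nat) set" where
  "tuples V B d k = {kk \<in> PiE (degs V d) (\<lambda>\<delta>. {tcnt B d \<delta>..acnt V d \<delta>}).
                       sum kk (degs V d) = k}"

definition alpha :: "nat set \<Rightarrow> nat set \<Rightarrow> (nat \<Rightarrow> nat) \<Rightarrow> nat \<Rightarrow> real" where
  "alpha V B d k = (\<Sum>kk\<in>tuples V B d k. acoef V B d kk)"

end

theory Submission imports Defs begin

text \<open>Each vertex of degree \<delta> outside S must avoid S entirely, which costs a factor
  C(n - k, \<delta>)/C(n, \<delta>) = O(n^-2) when n - k is bounded and \<delta> \<ge> 2; choosing which of the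
  a - k_i such vertices lie outside S costs at most n each. Since the deficits a_i - k_i
  add up to n - k, each coefficient is O(n^-(n - k)), and there are only O(1) tuples
  because every k_i lies in an interval of length n - k. The reachability probability R
  only enters through R \<le> 1.\<close>

definition ratio_bound :: "nat \<Rightarrow> real" where
  "ratio_bound D = 2 ^ (D + 1) * real D ^ D"

lemma ratio_bound_ge_1: "D \<ge> 1 \<Longrightarrow> 1 \<le> ratio_bound D"
proof -
  assume "D \<ge> 1"
  then have "1 * 1 \<le> (2::real) ^ (D + 1) * real D ^ D"
    by (intro mult_mono one_le_power) auto
  then show ?thesis unfolding ratio_bound_def by simp
qed

lemma choose_mult_power_le:
  fixes r :: real and a t j n :: nat
  assumes "t \<le> j" "j \<le> a" "a \<le> n" "0 \<le> r"
  shows "real ((a - t) choose (j - t)) * r ^ (a - j) \<le> (real n * r) ^ (a - j)"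
proof -
  have "(a - t) choose (j - t) = (a - t) choose (a - j)"
    using binomial_symmetric[of "j - t" "a - t"] assms by (simp add: diff_diff_eq2)
  also have "\<dots> \<le> (a - t) ^ (a - j)"
    using assms by (intro binomial_le_pow) simp
  also have "\<dots> \<le> n ^ (a - j)"
    using assms by (intro power_mono) auto
  finally have "real ((a - t) choose (j - t)) \<le> real n ^ (a - j)"
    by (metis of_nat_le_iff of_nat_power)
  then show ?thesis
    using assms by (simp add: power_mult_distrib mult_right_mono)
qed

lemma choose_div_choose_le:
  fixes l n \<delta> D :: nat
  assumes "2 \<le> \<delta>" "\<delta> \<le> D" "\<delta> \<le> n" "l \<le> D + 1"
  shows "real (l choose \<delta>) / real (n choose \<delta>) \<le> ratio_bound D / real n ^ 2"
proof -
  have n: "real n > 0" and D: "real D ^ D > 0" using assms by auto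
  have "real (l choose \<delta>) \<le> 2 ^ l"
    by (metis binomial_le_pow2 of_nat_le_iff of_nat_numeral of_nat_power)
  also have "\<dots> \<le> 2 ^ (D + 1)"
    using assms by (intro power_increasing) auto
  finally have num: "real (l choose \<delta>) \<le> 2 ^ (D + 1)" .
  have "real \<delta> ^ \<delta> \<le> real D ^ \<delta>" using assms by (intro power_mono) auto
  also have "\<dots> \<le> real D ^ D" using assms by (intro power_increasing) auto
  finally have "real n ^ \<delta> / real D ^ D \<le> real n ^ \<delta> / real \<delta> ^ \<delta>"
    using assms n by (intro divide_left_mono) auto
  moreover have "real n ^ 2 \<le> real n ^ \<delta>"
    using assms by (intro power_increasing) auto
  moreover have "real n ^ \<delta> / real \<delta> ^ \<delta> \<le> real (n choose \<delta>)"
    using binomial_ge_n_over_k_pow_k[of \<delta> n] assms by (simp add: power_divide)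
  ultimately have den: "real n ^ 2 / real D ^ D \<le> real (n choose \<delta>)"
    using D by (smt (verit) divide_right_mono)
  have "real (l choose \<delta>) / real (n choose \<delta>) \<le> 2 ^ (D + 1) / (real n ^ 2 / real D ^ D)"
    using num den n D by (intro frac_le) auto
  also have "\<dots> = ratio_bound D / real n ^ 2"
    unfolding ratio_bound_def using n D by (simp add: field_simps)
  finally show ?thesis .
qed

lemma sum_acnt:
  assumes "finite V"
  shows "sum (acnt V d) (degs V d) = card V"
proof -
  have "card V = (\<Sum>v\<in>V. 1::nat)" by simp
  also have "\<dots> = (\<Sum>y\<in>d ` V. \<Sum>v\<in>{x\<in>V. d x = y}. 1::nat)"
    using assms by (rule sum.image_gen)
  finally show ?thesis unfolding degs_def acnt_def by simp
qed

lemma sum_acnt_minus: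
  assumes "finite V" "\<forall>\<delta>\<in>degs V d. kk \<delta> \<le> acnt V d \<delta>"
  shows "(\<Sum>\<delta>\<in>degs V d. acnt V d \<delta> - kk \<delta>) = card V - sum kk (degs V d)"
  using sum_subtractf_nat[of "degs V d" kk "acnt V d"] assms sum_acnt[of V d] by auto

lemma R_nonneg: "0 \<le> R V B d kk"
  and R_le_1: "R V B d kk \<le> 1"
  unfolding R_def R_set_def by (simp_all add: measure_pmf.prob_le_1)

lemma acoef_le:
  assumes fin: "finite V" and ne: "V \<noteq> {}"
    and deg: "\<forall>v\<in>V. 2 \<le> d v \<and> d v \<le> card V"
    and kk: "\<forall>\<delta>\<in>degs V d. tcnt B d \<delta> \<le> kk \<delta> \<and> kk \<delta> \<le> acnt V d \<delta>"
    and gap: "card V - sum kk (degs V d) \<le> Max (degs V d) + 1"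
  shows "acoef V B d kk \<le>
    ratio_bound (Max (degs V d)) ^ (Max (degs V d) + 1)
      / real (card V) ^ (card V - sum kk (degs V d))"
proof -
  define n D l where "n = card V" and "D = Max (degs V d)" and "l = n - sum kk (degs V d)"
  define C where "C = ratio_bound D"
  have fd: "finite (degs V d)" using fin unfolding degs_def by simp
  have n: "real n > 0" using fin ne unfolding n_def by (simp add: card_gt_0_iff)
  have deg': "2 \<le> \<delta> \<and> \<delta> \<le> n \<and> \<delta> \<le> D" if "\<delta> \<in> degs V d" for \<delta>
    using that deg Max_ge[OF fd that] unfolding degs_def n_def D_def by auto
  then have C: "1 \<le> C"
    using ne unfolding C_def degs_def by (intro ratio_bound_ge_1) fastforce
  have "(\<Prod>\<delta>\<in>degs V d. real ((acnt V d \<delta> - tcnt B d \<delta>) choose (kk \<delta> - tcnt B d \<delta>))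
            * (real (l choose \<delta>) / real (n choose \<delta>)) ^ (acnt V d \<delta> - kk \<delta>))
        \<le> (\<Prod>\<delta>\<in>degs V d. (C / real n) ^ (acnt V d \<delta> - kk \<delta>))"
  proof (intro prod_mono conjI)
    fix \<delta> assume \<delta>: "\<delta> \<in> degs V d"
    have ratio: "real (l choose \<delta>) / real (n choose \<delta>) \<le> C / real n ^ 2"
      using choose_div_choose_le deg'[OF \<delta>] gap unfolding C_def l_def n_def D_def by blast
    have "real ((acnt V d \<delta> - tcnt B d \<delta>) choose (kk \<delta> - tcnt B d \<delta>))
            * (real (l choose \<delta>) / real (n choose \<delta>)) ^ (acnt V d \<delta> - kk \<delta>)
          \<le> (real n * (real (l choose \<delta>) / real (n choose \<delta>))) ^ (acnt V d \<delta> - kk \<delta>)"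
    proof (rule choose_mult_power_le)
      show "acnt V d \<delta> \<le> n" unfolding acnt_def n_def using fin by (intro card_mono) auto
    qed (use kk \<delta> in auto)
    also have "\<dots> \<le> (real n * (C / real n ^ 2)) ^ (acnt V d \<delta> - kk \<delta>)"
      using ratio n by (intro power_mono mult_left_mono) auto
    also have "real n * (C / real n ^ 2) = C / real n"
      using n by (simp add: power2_eq_square)
    finally show "real ((acnt V d \<delta> - tcnt B d \<delta>) choose (kk \<delta> - tcnt B d \<delta>))
            * (real (l choose \<delta>) / real (n choose \<delta>)) ^ (acnt V d \<delta> - kk \<delta>)
          \<le> (C / real n) ^ (acnt V d \<delta> - kk \<delta>)" .
  qed simp
  also have "\<dots> = (C / real n) ^ l"
  proof -
    have "(\<Sum>\<delta>\<in>degs V d. acnt V d \<delta> - kk \<delta>) = l"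
      unfolding l_def n_def using kk by (intro sum_acnt_minus[OF fin]) blast
    then show ?thesis by (simp flip: power_sum)
  qed
  also have "\<dots> = C ^ l / real n ^ l" by (simp add: power_divide)
  also have "\<dots> \<le> C ^ (D + 1) / real n ^ l"
    using C n gap unfolding l_def n_def D_def
    by (intro divide_right_mono power_increasing) auto
  finally have "acoef V B d kk \<le> C ^ (D + 1) / real n ^ l * R V B d kk"
    unfolding acoef_def l_def n_def
    by (intro mult_right_mono R_nonneg)
  also have "\<dots> \<le> C ^ (D + 1) / real n ^ l"
    using C n by (intro mult_left_le R_le_1) auto
  finally show ?thesis unfolding C_def l_def n_def D_def .
qed

lemma card_tuples_le:
  assumes "finite V"
  shows "card (tuples V B d k) \<le> (card V - k + 1) ^ card (degs V d)"
proof -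
  let ?I = "\<lambda>\<delta>. {acnt V d \<delta> - (card V - k)..acnt V d \<delta>}"
  have fd: "finite (degs V d)" using assms unfolding degs_def by simp
  have "tuples V B d k \<subseteq> PiE (degs V d) ?I"
  proof
    fix kk assume "kk \<in> tuples V B d k"
    then have kk: "kk \<in> PiE (degs V d) (\<lambda>\<delta>. {tcnt B d \<delta>..acnt V d \<delta>})"
      and sum: "sum kk (degs V d) = k" unfolding tuples_def by auto
    then have deficit: "(\<Sum>\<delta>\<in>degs V d. acnt V d \<delta> - kk \<delta>) = card V - k"
      using sum_acnt_minus[OF assms] by (metis PiE_E atLeastAtMost_iff)
    have "kk \<delta> \<in> ?I \<delta>" if "\<delta> \<in> degs V d" for \<delta>
      using member_le_sum[OF that, of "\<lambda>\<delta>. acnt V d \<delta> - kk \<delta>"] that fd deficit kk by auto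
    then show "kk \<in> PiE (degs V d) ?I" using kk by (auto simp: PiE_iff)
  qed
  then have "card (tuples V B d k) \<le> card (PiE (degs V d) ?I)"
    using fd by (intro card_mono finite_PiE) auto
  also have "\<dots> = (\<Prod>\<delta>\<in>degs V d. card (?I \<delta>))" using fd by (rule card_PiE)
  also have "\<dots> \<le> (\<Prod>\<delta>\<in>degs V d. card V - k + 1)" by (intro prod_mono) auto
  finally show ?thesis by simp
qed

lemma alpha_le:
  assumes fin: "finite V" and ne: "V \<noteq> {}"
    and deg: "\<forall>v\<in>V. 2 \<le> d v \<and> d v \<le> card V"
    and gap: "Min (degs V d) + 1 \<le> card V - k" "card V - k \<le> Max (degs V d) + 1"
  shows "alpha V B d k \<le> real (Max (degs V d) + 2) ^ card (degs V d)
    * ratio_bound (Max (degs V d)) ^ (Max (degs V d) + 1) / real (card V) ^ 2"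
proof -
  define n D where "n = card V" and "D = Max (degs V d)"
  define c where "c = ratio_bound D ^ (D + 1) / real n ^ (n - k)"
  have fd: "finite (degs V d)" and nd: "degs V d \<noteq> {}"
    using fin ne unfolding degs_def by auto
  have n: "real n > 0" using fin ne unfolding n_def by (simp add: card_gt_0_iff)
  have "2 \<le> Min (degs V d)" using Min_in[OF fd nd] deg unfolding degs_def by auto
  then have two: "2 \<le> n - k" using gap unfolding n_def by linarith
  have "acoef V B d kk \<le> c" if "kk \<in> tuples V B d k" for kk
  proof -
    have "\<forall>\<delta>\<in>degs V d. tcnt B d \<delta> \<le> kk \<delta> \<and> kk \<delta> \<le> acnt V d \<delta>" "sum kk (degs V d) = k"
      using that unfolding tuples_def by auto
    then show ?thesis using acoef_le[OF fin ne deg] gap unfolding c_def n_def D_def by auto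
  qed
  then have "alpha V B d k \<le> real (card (tuples V B d k)) * c"
    unfolding alpha_def using sum_bounded_above[of "tuples V B d k"] by auto
  also have "\<dots> \<le> real ((D + 2) ^ card (degs V d)) * (ratio_bound D ^ (D + 1) / real n ^ 2)"
  proof (intro mult_mono)
    have "card (tuples V B d k) \<le> (n - k + 1) ^ card (degs V d)"
      using card_tuples_le[OF fin] unfolding n_def .
    also have "\<dots> \<le> (D + 2) ^ card (degs V d)"
      using gap unfolding n_def D_def by (intro power_mono) auto
    finally show "real (card (tuples V B d k)) \<le> real ((D + 2) ^ card (degs V d))"
      by (simp only: of_nat_le_iff)
    show "c \<le> ratio_bound D ^ (D + 1) / real n ^ 2"
      unfolding c_def ratio_bound_def using n two
      by (intro divide_left_mono power_increasing mult_pos_pos) auto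
  qed (auto simp: c_def ratio_bound_def)
  finally show ?thesis unfolding n_def D_def by simp
qed

theorem lemma17:
  fixes X Dmax :: nat
  shows "\<exists>h>0. \<forall>(V::nat set) (B::nat set) (d::nat \<Rightarrow> nat).
     finite V \<and> V \<noteq> {} \<and> B \<subseteq> V \<and>
     (\<forall>v\<in>V. 2 \<le> d v \<and> d v \<le> card V) \<and>
     card (degs V d) = X \<and> Max (degs V d) = Dmax \<longrightarrow>
     (\<forall>k::nat. card B \<le> k \<and> Min (degs V d) + 1 \<le> card V - k \<and> card V - k \<le> Dmax + 1 \<longrightarrow>
        (\<forall>kk. (\<forall>\<delta>\<in>degs V d. tcnt B d \<delta> \<le> kk \<delta> \<and> kk \<delta> \<le> acnt V d \<delta>) \<and>
               sum kk (degs V d) = k \<longrightarrow>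
               acoef V B d kk < h / real (card V) ^ (card V - k)) \<and>
        alpha V B d k \<le> h / real (card V) ^ 2)"
proof -
  define c where "c = ratio_bound Dmax ^ (Dmax + 1)"
  have c: "0 \<le> c" unfolding c_def ratio_bound_def by simp
  define h where "h = real (Dmax + 2) ^ X * c + 1"
  have "0 < h" "c < h" "real (Dmax + 2) ^ X * c \<le> h"
    using c mult_right_mono[OF one_le_power, of "real (Dmax + 2)" c X] unfolding h_def by auto
  have acoef: "acoef V B d kk < h / real (card V) ^ (card V - k)"
    if V: "finite V" "V \<noteq> {}" "\<forall>v\<in>V. 2 \<le> d v \<and> d v \<le> card V"
      and "Max (degs V d) = Dmax" "card V - k \<le> Dmax + 1"
      and "\<forall>\<delta>\<in>degs V d. tcnt B d \<delta> \<le> kk \<delta> \<and> kk \<delta> \<le> acnt V d \<delta>" "sum kk (degs V d) = k"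
    for V B d k kk
  proof -
    have "acoef V B d kk \<le> c / real (card V) ^ (card V - k)"
      using acoef_le[OF V, of B kk] that unfolding c_def by simp
    also have "\<dots> < h / real (card V) ^ (card V - k)"
      using \<open>c < h\<close> V by (intro divide_strict_right_mono) (auto simp: card_gt_0_iff)
    finally show ?thesis .
  qed
  have alpha: "alpha V B d k \<le> h / real (card V) ^ 2"
    if V: "finite V" "V \<noteq> {}" "\<forall>v\<in>V. 2 \<le> d v \<and> d v \<le> card V"
      and "card (degs V d) = X" "Max (degs V d) = Dmax"
      and "Min (degs V d) + 1 \<le> card V - k" "card V - k \<le> Dmax + 1"
    for V B d k
  proof -
    have "alpha V B d k \<le> real (Dmax + 2) ^ X * c / real (card V) ^ 2"
      using alpha_le[OF V, of k B] that unfolding c_def by simp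
    also have "\<dots> \<le> h / real (card V) ^ 2"
      using \<open>_ \<le> h\<close> by (intro divide_right_mono) auto
    finally show ?thesis .
  qed
  show ?thesis
    using \<open>0 < h\<close> by (intro exI[of _ h] conjI allI impI) (auto intro!: acoef alpha)
qed

end
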